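(* For every $N\times N$ stochastic matrix $A$ and every $t\geq 1$, one has $\frac{1}{N}\leq \tau_t(A)\leq 1$. Moreover, if $A$ is reducible, then $\tau_t(A)\leq 1-\frac{1}{N+1}$ for all $t\geq 1$.
   Context: Let $X$ be a square-integrable real random variable with $\mathbb E X=\theta$ and $\mathrm{Var}(X)=\sigma^2>0$. Fix an integer $N\geq 2$. For $i\in\{1,\dots,N\}$ and $t\geq 1$ let $X_t^{(i)}$ be random variables distributed as $X$, mutually independent over both $i$ and $t$, and write $\mathbf X_t=(X_t^{(1)},\dots,X_t^{(N)})^\top$. Let $A=(a_{ij})_{1\le i,j\le N}$ be a stochastic matrix ($a_{ij}\geq 0$ and every row sums to $1$). Define $\hat{\boldsymbol\theta}_1=\mathbf X_1$ and $\hat{\boldsymbol\theta}_{t+1}=\frac{t}{t+1}A\hat{\boldsymbol\theta}_t+\frac{1}{t+1}\mathbf X_{t+1}$ for $t\geq 1$. Let $\bar{\mathbb X}_{Nt}=\frac{1}{Nt}\sum_{i=1}^N\sum_{k=1}^t X_k^{(i)}$, $\mathbf 1=(1,\dots,1)^\top$, and let $\|\cdot\|$ denote the Euclidean norm. The performance ratio is $\tau_t(A)=\dfrac{\mathbb E\|(\bar{\mathbb X}_{Nt}-\theta)\mathbf 1\|^2}{\mathbb E\|\hat{\boldsymbol\theta}_t-\theta\mathbf 1\|^2}$, $t\geq 1$. A stochastic matrix $A$ is irreducible if for every pair $(i,j)$ there is an integer $k\geq 0$ with $(A^k)_{ij}\neq 0$, and reducible otherwise. *)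

theory Defs
  imports "HOL-Probability.Probability"
begin

text \<open>Matrices are indexed by a finite type 'n with N = CARD('n).\<close>

definition stochastic_matrix :: "real^'n^'n \<Rightarrow> bool" where
  "stochastic_matrix A \<longleftrightarrow> (\<forall>i j. A $ i $ j \<ge> 0) \<and> (\<forall>i. (\<Sum>j\<in>UNIV. A $ i $ j) = 1)"

primrec mat_pow :: "real^'n^'n \<Rightarrow> nat \<Rightarrow> real^'n^'n" where
  "mat_pow A 0 = mat 1"
| "mat_pow A (Suc k) = A ** mat_pow A k"

definition irreducible_matrix :: "real^'n^'n \<Rightarrow> bool" where
  "irreducible_matrix A \<longleftrightarrow> (\<forall>i j. \<exists>k. mat_pow A k $ i $ j \<noteq> 0)"

text \<open>Observations: X t i \<omega> is X_t^{(i)}(\<omega>), t \<ge> 1.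
  est_aux A X n = \<theta>hat_{n+1}.\<close>

primrec est_aux :: "real^'n^'n \<Rightarrow> (nat \<Rightarrow> 'n \<Rightarrow> 'a \<Rightarrow> real) \<Rightarrow> nat \<Rightarrow> 'a \<Rightarrow> real^'n" where
  "est_aux A X 0 = (\<lambda>\<omega>. \<chi> i. X 1 i \<omega>)"
| "est_aux A X (Suc n) = (\<lambda>\<omega>.
     (real (Suc n) / real (Suc n + 1)) *\<^sub>R (A *v est_aux A X n \<omega>)
     + (1 / real (Suc n + 1)) *\<^sub>R (\<chi> i. X (Suc n + 1) i \<omega>))"

definition theta_hat :: "real^'n^'n \<Rightarrow> (nat \<Rightarrow> 'n \<Rightarrow> 'a \<Rightarrow> real) \<Rightarrow> nat \<Rightarrow> 'a \<Rightarrow> real^'n" where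
  "theta_hat A X t = est_aux A X (t - 1)"

definition sample_mean :: "(nat \<Rightarrow> 'n::finite \<Rightarrow> 'a \<Rightarrow> real) \<Rightarrow> nat \<Rightarrow> 'a \<Rightarrow> real" where
  "sample_mean X t \<omega> = (1 / (real CARD('n) * real t)) * (\<Sum>i\<in>UNIV. \<Sum>k=1..t. X k i \<omega>)"

definition perf_ratio :: "'a measure \<Rightarrow> real \<Rightarrow> real^'n^'n \<Rightarrow> (nat \<Rightarrow> 'n \<Rightarrow> 'a \<Rightarrow> real) \<Rightarrow> nat \<Rightarrow> real" where
  "perf_ratio M \<theta> A X t =
     (\<integral>\<omega>. (norm ((sample_mean X t \<omega> - \<theta>) *\<^sub>R (\<chi> i. 1 :: real^'n)))\<^sup>2 \<partial>M)
     / (\<integral>\<omega>. (norm (theta_hat A X t \<omega> - \<theta> *\<^sub>R (\<chi> i. 1)))\<^sup>2 \<partial>M)"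

end

theory Submission
  imports Defs
begin

text \<open>
  Unrolling the recursion, the estimation error is linear in the centred observations:
  theta_hat t - theta 1 = (1/t) sum_k A^(t-k) (X_k - theta 1). Independent centred
  observations are orthogonal in L2 with common variance sigma^2, so the mean square error of
  the estimator is (sigma^2/t^2) sum_k |A^(t-k)|_F^2, while that of the sample mean is
  sigma^2/t; hence tau_t(A) = t / sum_k |A^(t-k)|_F^2. Each row of a stochastic matrix is a
  probability vector, whose squared norm lies in [1/N, 1], so 1 <= |P|_F^2 <= N. If A is
  reducible, the states reachable from some state form a proper closed class S; the rows of
  A^m indexed by S are probability vectors supported on S and contribute at least 1 in total,
  the remaining rows at least 1/N each, so |A^m|_F^2 >= 1 + 1/N.
\<close>

definition frobenius_norm_sq :: "real^'n^'n \<Rightarrow> real" where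
  "frobenius_norm_sq P = (\<Sum>i\<in>UNIV. \<Sum>j\<in>UNIV. (P $ i $ j)\<^sup>2)"

lemma stochastic_matrix_mat_1: "stochastic_matrix (mat 1 :: real^'n^'n)"
  by (simp add: stochastic_matrix_def mat_def)

lemma stochastic_matrix_mult:
  assumes "stochastic_matrix A" "stochastic_matrix B"
  shows "stochastic_matrix (A ** B)"
proof -
  have "(\<Sum>j\<in>UNIV. (A ** B) $ i $ j) = 1" for i
  proof -
    have "(\<Sum>j\<in>UNIV. (A ** B) $ i $ j) = (\<Sum>j\<in>UNIV. \<Sum>l\<in>UNIV. A $ i $ l * B $ l $ j)"
      by (simp add: matrix_matrix_mult_def)
    also have "\<dots> = (\<Sum>l\<in>UNIV. A $ i $ l * (\<Sum>j\<in>UNIV. B $ l $ j))"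
      by (subst sum.swap) (simp add: sum_distrib_left)
    also have "\<dots> = 1"
      using assms by (simp add: stochastic_matrix_def)
    finally show ?thesis .
  qed
  with assms show ?thesis
    by (auto simp: stochastic_matrix_def matrix_matrix_mult_def intro!: sum_nonneg)
qed

lemma stochastic_matrix_mat_pow: "stochastic_matrix A \<Longrightarrow> stochastic_matrix (mat_pow A k)"
  by (induction k) (auto intro: stochastic_matrix_mult stochastic_matrix_mat_1)

lemma mat_pow_add: "mat_pow A (k + m) = mat_pow A k ** mat_pow A m"
  by (induction k) (simp_all add: matrix_mul_assoc)

lemma stochastic_matrix_mult_ones: "stochastic_matrix P \<Longrightarrow> P *v (\<chi> i. 1) = (\<chi> i. 1)"
  by (simp add: stochastic_matrix_def matrix_vector_mult_def vec_eq_iff)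

lemma sum_squares_ge_inverse_card:
  fixes r :: "'b \<Rightarrow> real"
  assumes "finite S" "S \<noteq> {}" "(\<Sum>l\<in>S. r l) = 1"
  shows "1 / card S \<le> (\<Sum>l\<in>S. (r l)\<^sup>2)"
proof -
  define c where "c = real (card S)"
  have c: "c > 0" using assms by (simp add: c_def card_gt_0_iff)
  have "0 \<le> (\<Sum>l\<in>S. (r l - 1/c)\<^sup>2)" by (simp add: sum_nonneg)
  also have "\<dots> = (\<Sum>l\<in>S. (r l)\<^sup>2) - 2/c * (\<Sum>l\<in>S. r l) + c * (1/c)\<^sup>2"
    by (simp add: power2_diff sum.distrib sum_subtractf sum_distrib_left c_def)
  also have "\<dots> = (\<Sum>l\<in>S. (r l)\<^sup>2) - 1/c"
    using c assms(3) by (simp add: power2_eq_square field_simps)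
  finally show ?thesis by (simp add: c_def)
qed

lemma sum_squares_le_one:
  fixes r :: "'b \<Rightarrow> real"
  assumes "finite S" "\<And>l. l \<in> S \<Longrightarrow> r l \<ge> 0" "(\<Sum>l\<in>S. r l) = 1"
  shows "(\<Sum>l\<in>S. (r l)\<^sup>2) \<le> 1"
proof -
  have "r l \<le> 1" if "l \<in> S" for l
    using member_le_sum[of l S r] assms that by auto
  then have "(\<Sum>l\<in>S. (r l)\<^sup>2) \<le> (\<Sum>l\<in>S. r l)"
    using assms by (intro sum_mono) (simp add: power2_eq_square mult_left_le)
  with assms show ?thesis by simp
qed

lemma frobenius_norm_sq_stochastic_bounds:
  fixes P :: "real^'n^'n"
  assumes "stochastic_matrix P"
  shows "1 \<le> frobenius_norm_sq P" and "frobenius_norm_sq P \<le> CARD('n)"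
proof -
  have row: "1 / CARD('n) \<le> (\<Sum>j\<in>UNIV. (P $ i $ j)\<^sup>2)" "(\<Sum>j\<in>UNIV. (P $ i $ j)\<^sup>2) \<le> 1" for i
    using sum_squares_ge_inverse_card[of UNIV "\<lambda>j. P $ i $ j"]
      sum_squares_le_one[of UNIV "\<lambda>j. P $ i $ j"] assms
    by (auto simp: stochastic_matrix_def)
  have "(\<Sum>i\<in>(UNIV::'n set). 1 / CARD('n)) \<le> frobenius_norm_sq P"
    unfolding frobenius_norm_sq_def by (intro sum_mono row)
  then show "1 \<le> frobenius_norm_sq P" by simp
  have "frobenius_norm_sq P \<le> (\<Sum>i\<in>(UNIV::'n set). 1)"
    unfolding frobenius_norm_sq_def by (intro sum_mono row)
  then show "frobenius_norm_sq P \<le> CARD('n)" by simp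
qed

lemma frobenius_norm_sq_closed_class:
  fixes P :: "real^'n^'n"
  assumes P: "stochastic_matrix P" and S: "S \<noteq> {}" "S \<noteq> UNIV"
    and closed: "\<And>l q. l \<in> S \<Longrightarrow> q \<notin> S \<Longrightarrow> P $ l $ q = 0"
  shows "1 + 1 / CARD('n) \<le> frobenius_norm_sq P"
proof -
  define N where "N = real CARD('n)"
  define row where "row l = (\<Sum>q\<in>UNIV. (P $ l $ q)\<^sup>2)" for l
  have "card S < CARD('n)"
    using S by (intro psubset_card_mono) auto
  then have card_compl: "1 \<le> real (card (UNIV - S))"
    by (simp add: card_Diff_subset)
  have row_S: "1 / card S \<le> row l" if "l \<in> S" for l
  proof -
    have "(\<Sum>q\<in>S. P $ l $ q) = (\<Sum>q\<in>UNIV. P $ l $ q)"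
      by (rule sum.mono_neutral_left) (auto intro: closed that)
    with P have "1 / card S \<le> (\<Sum>q\<in>S. (P $ l $ q)\<^sup>2)"
      using S by (intro sum_squares_ge_inverse_card) (auto simp: stochastic_matrix_def)
    also have "\<dots> \<le> row l"
      unfolding row_def by (rule sum_mono2) auto
    finally show ?thesis .
  qed
  have row_any: "1 / N \<le> row l" for l
    using sum_squares_ge_inverse_card[of UNIV "\<lambda>q. P $ l $ q"] P
    by (auto simp: stochastic_matrix_def row_def N_def)
  have "card S > 0"
    using S by (simp add: card_gt_0_iff)
  have "1 / N \<le> card (UNIV - S) / N"
    using card_compl by (simp add: N_def divide_right_mono)
  then have "1 + 1 / N \<le> 1 + card (UNIV - S) / N"
    by linarith
  also have "\<dots> = (\<Sum>l\<in>S. 1 / card S) + (\<Sum>l\<in>UNIV - S. 1 / N)"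
    using S \<open>card S > 0\<close> by simp
  also have "\<dots> \<le> (\<Sum>l\<in>S. row l) + (\<Sum>l\<in>UNIV - S. row l)"
    by (intro add_mono sum_mono row_S row_any)
  also have "\<dots> = frobenius_norm_sq P"
    using sum.subset_diff[of S UNIV row] by (simp add: frobenius_norm_sq_def row_def add.commute)
  finally show ?thesis
    unfolding N_def .
qed

lemma mat_pow_nonneg: "stochastic_matrix A \<Longrightarrow> 0 \<le> mat_pow A k $ i $ j"
  using stochastic_matrix_mat_pow by (auto simp: stochastic_matrix_def)

lemma mat_pow_reach_trans:
  assumes A: "stochastic_matrix A"
    and "mat_pow A k $ i $ l \<noteq> 0" "mat_pow A m $ l $ q \<noteq> 0"
  shows "mat_pow A (k + m) $ i $ q \<noteq> 0"
proof -
  have "0 < mat_pow A k $ i $ l * mat_pow A m $ l $ q"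
    using assms mat_pow_nonneg[OF A] by (simp add: less_le)
  also have "\<dots> \<le> (\<Sum>r\<in>UNIV. mat_pow A k $ i $ r * mat_pow A m $ r $ q)"
    by (rule member_le_sum) (auto simp: mat_pow_nonneg[OF A])
  also have "\<dots> = mat_pow A (k + m) $ i $ q"
    by (simp add: mat_pow_add matrix_matrix_mult_def)
  finally show ?thesis by simp
qed

lemma frobenius_norm_sq_mat_pow_reducible:
  fixes A :: "real^'n^'n"
  assumes A: "stochastic_matrix A" and "\<not> irreducible_matrix A"
  shows "1 + 1 / CARD('n) \<le> frobenius_norm_sq (mat_pow A m)"
proof -
  obtain i j where unreachable: "\<And>k. mat_pow A k $ i $ j = 0"
    using assms(2) unfolding irreducible_matrix_def by blast
  define S where "S = {l. \<exists>k. mat_pow A k $ i $ l \<noteq> 0}"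
  have "i \<in> S"
    unfolding S_def by (auto intro!: exI[of _ 0] simp: mat_def)
  moreover have "j \<notin> S"
    unfolding S_def using unreachable by auto
  moreover have "mat_pow A m $ l $ q = 0" if "l \<in> S" "q \<notin> S" for l q
    using that mat_pow_reach_trans[OF A] unfolding S_def by blast
  ultimately show ?thesis
    by (intro frobenius_norm_sq_closed_class[OF stochastic_matrix_mat_pow[OF A], of S]) auto
qed

lemma sum_frobenius_norm_sq_mat_pow_bounds:
  fixes A :: "real^'n^'n"
  assumes A: "stochastic_matrix A"
  shows "real t \<le> (\<Sum>k=1..t. frobenius_norm_sq (mat_pow A (t - k)))"
    and "(\<Sum>k=1..t. frobenius_norm_sq (mat_pow A (t - k))) \<le> CARD('n) * real t"
proof -
  have "(\<Sum>k=1..t. 1::real) \<le> (\<Sum>k=1..t. frobenius_norm_sq (mat_pow A (t - k)))"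
    by (intro sum_mono frobenius_norm_sq_stochastic_bounds(1) stochastic_matrix_mat_pow A)
  then show "real t \<le> (\<Sum>k=1..t. frobenius_norm_sq (mat_pow A (t - k)))"
    by simp
  have "(\<Sum>k=1..t. frobenius_norm_sq (mat_pow A (t - k))) \<le> (\<Sum>k=1..t. real CARD('n))"
    by (intro sum_mono frobenius_norm_sq_stochastic_bounds(2) stochastic_matrix_mat_pow A)
  then show "(\<Sum>k=1..t. frobenius_norm_sq (mat_pow A (t - k))) \<le> CARD('n) * real t"
    by (simp add: mult.commute)
qed

lemma sum_frobenius_norm_sq_mat_pow_reducible:
  fixes A :: "real^'n^'n"
  assumes "stochastic_matrix A" and "\<not> irreducible_matrix A"
  shows "real t * (1 + 1 / CARD('n)) \<le> (\<Sum>k=1..t. frobenius_norm_sq (mat_pow A (t - k)))"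
proof -
  have "(\<Sum>k=1..t. 1 + 1 / real CARD('n)) \<le> (\<Sum>k=1..t. frobenius_norm_sq (mat_pow A (t - k)))"
    by (intro sum_mono frobenius_norm_sq_mat_pow_reducible assms)
  then show ?thesis
    by (simp add: mult.commute)
qed

lemma running_average_step:
  fixes a b :: real
  assumes "a \<noteq> 0" "b \<noteq> 0" "b = a + 1"
  shows "a / b * (\<theta> + 1 / a * s) + 1 / b * x - \<theta> = (s + (x - \<theta>)) / b"
proof -
  have "a * (\<theta> + 1 / a * s) = a * \<theta> + s"
    using \<open>a \<noteq> 0\<close> by (simp add: algebra_simps)
  then have "a / b * (\<theta> + 1 / a * s) + 1 / b * x - \<theta> = (a * \<theta> + s) / b + 1 / b * x - \<theta>"
    by (simp only: times_divide_eq_left)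
  also have "\<dots> = (a * \<theta> + s + x - b * \<theta>) / b"
    using \<open>b \<noteq> 0\<close> by (simp add: field_simps)
  also have "a * \<theta> + s + x - b * \<theta> = s + (x - \<theta>)"
    using \<open>b = a + 1\<close> by (simp add: algebra_simps)
  finally show ?thesis .
qed

declare sum.cl_ivl_Suc [simp del]

lemma mat_pow_sum_shift:
  "A *v (\<Sum>k=1..n+1. mat_pow A (n + 1 - k) *v z k) + z (n + 2)
    = (\<Sum>k=1..n+2. mat_pow A (n + 2 - k) *v z k)"
proof -
  have "A *v (\<Sum>k=1..n+1. mat_pow A (n + 1 - k) *v z k)
      = (\<Sum>k=1..n+1. A *v (mat_pow A (n + 1 - k) *v z k))"
    by (simp add: linear_sum[OF matrix_vector_mul_linear])
  also have "\<dots> = (\<Sum>k=1..n+1. mat_pow A (n + 2 - k) *v z k)"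
  proof (rule sum.cong[OF refl])
    fix k assume "k \<in> {1..n+1}"
    then have "n + 2 - k = Suc (n + 1 - k)"
      by (simp add: Suc_diff_le)
    then show "A *v (mat_pow A (n + 1 - k) *v z k) = mat_pow A (n + 2 - k) *v z k"
      by (simp add: matrix_vector_mul_assoc)
  qed
  finally show ?thesis
    using sum.cl_ivl_Suc[of "\<lambda>k. mat_pow A (n + 2 - k) *v z k" 1 "n + 1"] by simp
qed

lemma est_aux_deviation:
  fixes A :: "real^'n^'n"
  assumes A: "stochastic_matrix A"
  shows "est_aux A X n \<omega> - \<theta> *\<^sub>R (\<chi> i. 1) =
    (1 / real (n + 1)) *\<^sub>R (\<Sum>k=1..n+1. mat_pow A (n + 1 - k) *v (\<chi> l. X k l \<omega> - \<theta>))"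
proof (induction n)
  case 0
  show ?case by (simp add: vec_eq_iff)
next
  case (Suc n)
  define z where "z k = (\<chi> l. X k l \<omega> - \<theta>)" for k
  define S where "S = (\<Sum>k=1..n+1. mat_pow A (n + 1 - k) *v z k)"
  have AS: "A *v S + z (n + 2) = (\<Sum>k=1..n+2. mat_pow A (n + 2 - k) *v z k)"
    unfolding S_def by (rule mat_pow_sum_shift)
  have est: "est_aux A X n \<omega> = \<theta> *\<^sub>R (\<chi> i. 1) + (1 / real (Suc n)) *\<^sub>R S"
    using Suc.IH by (simp add: S_def z_def algebra_simps)
  have Av: "A *v est_aux A X n \<omega> = \<theta> *\<^sub>R (\<chi> i. 1) + (1 / real (Suc n)) *\<^sub>R (A *v S)"
    unfolding est
    by (simp add: matrix_vector_right_distrib matrix_vector_mult_scaleR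
        stochastic_matrix_mult_ones[OF A])
  have "(est_aux A X (Suc n) \<omega> - \<theta> *\<^sub>R (\<chi> i. 1)) $ i
      = ((A *v S) $ i + z (n + 2) $ i) / real (n + 2)" for i
  proof -
    have "(est_aux A X (Suc n) \<omega> - \<theta> *\<^sub>R (\<chi> i. 1)) $ i
        = real (Suc n) / real (Suc n + 1) * (\<theta> + 1 / real (Suc n) * (A *v S) $ i)
          + 1 / real (Suc n + 1) * X (Suc n + 1) i \<omega> - \<theta>"
      by (simp add: Av)
    also have "\<dots> = ((A *v S) $ i + (X (Suc n + 1) i \<omega> - \<theta>)) / real (Suc n + 1)"
      by (rule running_average_step) simp_all
    also have "\<dots> = ((A *v S) $ i + z (n + 2) $ i) / real (n + 2)"
      by (simp add: z_def)
    finally show ?thesis .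
  qed
  then have "est_aux A X (Suc n) \<omega> - \<theta> *\<^sub>R (\<chi> i. 1) = (1 / real (n + 2)) *\<^sub>R (A *v S + z (n + 2))"
    by (simp add: vec_eq_iff)
  then show ?case
    by (simp only: AS) (simp add: z_def)
qed

lemma integral_square_sum_orthogonal:
  fixes Z :: "'i \<Rightarrow> 'a \<Rightarrow> real"
  assumes "finite J"
    and int: "\<And>p q. p \<in> J \<Longrightarrow> q \<in> J \<Longrightarrow> integrable M (\<lambda>\<omega>. Z p \<omega> * Z q \<omega>)"
    and orth: "\<And>p q. p \<in> J \<Longrightarrow> q \<in> J \<Longrightarrow> (\<integral>\<omega>. Z p \<omega> * Z q \<omega> \<partial>M) = (if p = q then s else 0)"
  shows "integrable M (\<lambda>\<omega>. (\<Sum>p\<in>J. c p * Z p \<omega>)\<^sup>2)"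
    and "(\<integral>\<omega>. (\<Sum>p\<in>J. c p * Z p \<omega>)\<^sup>2 \<partial>M) = s * (\<Sum>p\<in>J. (c p)\<^sup>2)"
proof -
  have square: "(\<lambda>\<omega>. (\<Sum>p\<in>J. c p * Z p \<omega>)\<^sup>2)
      = (\<lambda>\<omega>. \<Sum>p\<in>J. \<Sum>q\<in>J. (c p * c q) * (Z p \<omega> * Z q \<omega>))"
    by (simp add: fun_eq_iff power2_eq_square sum_product algebra_simps)
  show "integrable M (\<lambda>\<omega>. (\<Sum>p\<in>J. c p * Z p \<omega>)\<^sup>2)"
    unfolding square by (simp add: int)
  have "(\<integral>\<omega>. (\<Sum>p\<in>J. c p * Z p \<omega>)\<^sup>2 \<partial>M)
      = (\<Sum>p\<in>J. \<Sum>q\<in>J. (c p * c q) * (\<integral>\<omega>. Z p \<omega> * Z q \<omega> \<partial>M))"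
    unfolding square by (simp add: integrable_sum int)
  also have "\<dots> = (\<Sum>p\<in>J. \<Sum>q\<in>J. if q = p then (c p)\<^sup>2 * s else 0)"
    by (intro sum.cong refl) (auto simp: orth power2_eq_square)
  also have "\<dots> = s * (\<Sum>p\<in>J. (c p)\<^sup>2)"
    using \<open>finite J\<close> by (simp add: sum_distrib_left mult.commute)
  finally show "(\<integral>\<omega>. (\<Sum>p\<in>J. c p * Z p \<omega>)\<^sup>2 \<partial>M) = s * (\<Sum>p\<in>J. (c p)\<^sup>2)" .
qed

lemma identically_distributed_integral:
  fixes f :: "real \<Rightarrow> real"
  assumes Y: "Y \<in> borel_measurable M" and Z: "Z \<in> borel_measurable M"
    and distr: "distr M borel Z = distr M borel Y"
    and f: "f \<in> borel_measurable borel" and int: "integrable M (\<lambda>\<omega>. f (Y \<omega>))"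
  shows "integrable M (\<lambda>\<omega>. f (Z \<omega>)) \<and> (\<integral>\<omega>. f (Z \<omega>) \<partial>M) = (\<integral>\<omega>. f (Y \<omega>) \<partial>M)"
proof
  have "integrable (distr M borel Y) f"
    using Y f int integrable_distr_eq by blast
  then have "integrable (distr M borel Z) f"
    using distr by simp
  then show "integrable M (\<lambda>\<omega>. f (Z \<omega>))"
    using Z f integrable_distr_eq by blast
  have "(\<integral>\<omega>. f (Z \<omega>) \<partial>M) = integral\<^sup>L (distr M borel Z) f"
    using integral_distr[OF Z f] by simp
  also have "\<dots> = (\<integral>\<omega>. f (Y \<omega>) \<partial>M)"
    using integral_distr[OF Y f] distr by simp
  finally show "(\<integral>\<omega>. f (Z \<omega>) \<partial>M) = (\<integral>\<omega>. f (Y \<omega>) \<partial>M)" .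
qed

lemma power2_norm_vec: "(norm (v :: real^'n))\<^sup>2 = (\<Sum>i\<in>UNIV. (v $ i)\<^sup>2)"
  by (simp only: power2_norm_eq_inner inner_vec_def) (simp add: power2_eq_square)

locale iid_array = prob_space M for M :: "'a measure" +
  fixes Y :: "'a \<Rightarrow> real" and X :: "nat \<Rightarrow> 'n::finite \<Rightarrow> 'a \<Rightarrow> real"
  assumes Y_measurable: "Y \<in> borel_measurable M"
    and Y_square_integrable: "integrable M (\<lambda>\<omega>. (Y \<omega>)\<^sup>2)"
    and X_indep: "indep_vars (\<lambda>_. borel) (\<lambda>(k, i). X k i) ({1..} \<times> UNIV)"
    and X_distr: "\<And>k i. k \<ge> 1 \<Longrightarrow> distr M borel (X k i) = distr M borel Y"
begin

lemma X_measurable: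
  assumes "k \<ge> 1"
  shows "X k i \<in> borel_measurable M"
proof -
  have "\<forall>p\<in>{1..} \<times> UNIV. (\<lambda>(k, i). X k i) p \<in> borel_measurable M"
    using X_indep unfolding indep_vars_def2 by blast
  then show ?thesis
    using assms by force
qed

lemma integral_comp_X:
  fixes f :: "real \<Rightarrow> real"
  assumes "k \<ge> 1" "f \<in> borel_measurable borel" "integrable M (\<lambda>\<omega>. f (Y \<omega>))"
  shows "integrable M (\<lambda>\<omega>. f (X k i \<omega>))" "(\<integral>\<omega>. f (X k i \<omega>) \<partial>M) = (\<integral>\<omega>. f (Y \<omega>) \<partial>M)"
  using identically_distributed_integral[OF Y_measurable X_measurable[OF \<open>k \<ge> 1\<close>]
      X_distr[OF \<open>k \<ge> 1\<close>] assms(2,3)]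
  by simp_all

lemma integrable_Y: "integrable M Y"
  by (rule square_integrable_imp_integrable[OF Y_measurable Y_square_integrable])

lemma integrable_Y_centered_square: "integrable M (\<lambda>\<omega>. (Y \<omega> - expectation Y)\<^sup>2)"
  using Y_square_integrable integrable_Y by (simp add: power2_diff)

definition centered :: "nat \<times> 'n \<Rightarrow> 'a \<Rightarrow> real" where
  "centered p \<omega> = (case p of (k, i) \<Rightarrow> X k i \<omega>) - expectation Y"

lemma centered_Pair [simp]: "centered (k, i) = (\<lambda>\<omega>. X k i \<omega> - expectation Y)"
  by (simp add: fun_eq_iff centered_def)

lemma centered_mean_zero:
  assumes "p \<in> {1..} \<times> UNIV"
  shows "integrable M (centered p)" "expectation (centered p) = 0"
proof -
  obtain k i where p: "p = (k, i)" and "k \<ge> 1"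
    using assms by auto
  have "(\<lambda>x. x) \<in> borel_measurable (borel :: real measure)"
    by measurable
  from integral_comp_X[OF \<open>k \<ge> 1\<close> this] integrable_Y
  have "integrable M (X k i)" "expectation (X k i) = expectation Y"
    by simp_all
  then show "integrable M (centered p)" "expectation (centered p) = 0"
    by (simp_all add: p prob_space)
qed

lemma centered_indep: "indep_vars (\<lambda>_. borel) centered ({1..} \<times> UNIV)"
proof -
  have "indep_vars (\<lambda>_. borel) (\<lambda>p \<omega>. (\<lambda>x. x - expectation Y) ((\<lambda>(k, i). X k i) p \<omega>))
      ({1..} \<times> UNIV)"
    by (rule indep_vars_compose2[OF X_indep]) measurable
  also have "(\<lambda>p \<omega>. (\<lambda>x. x - expectation Y) ((\<lambda>(k, i). X k i) p \<omega>)) = centered"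
    by (simp add: fun_eq_iff centered_def split_beta)
  finally show ?thesis .
qed

lemma centered_orthogonal:
  assumes p: "p \<in> {1..} \<times> UNIV" and q: "q \<in> {1..} \<times> UNIV"
  shows "integrable M (\<lambda>\<omega>. centered p \<omega> * centered q \<omega>)"
    and "(\<integral>\<omega>. centered p \<omega> * centered q \<omega> \<partial>M) = (if p = q then variance Y else 0)"
proof -
  have "integrable M (\<lambda>\<omega>. centered p \<omega> * centered q \<omega>) \<and>
      (\<integral>\<omega>. centered p \<omega> * centered q \<omega> \<partial>M) = (if p = q then variance Y else 0)"
  proof (cases "p = q")
    case True
    obtain k i where pk: "p = (k, i)" "k \<ge> 1"
      using p by auto
    have "(\<lambda>x. (x - expectation Y)\<^sup>2) \<in> borel_measurable borel"
      by measurable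
    from integral_comp_X[OF \<open>k \<ge> 1\<close> this integrable_Y_centered_square]
    show ?thesis
      unfolding True[symmetric] pk(1) by (simp add: power2_eq_square)
  next
    case False
    have indep: "indep_vars (\<lambda>_. borel) centered {p, q}"
      by (rule indep_vars_subset[OF centered_indep]) (use p q in \<open>simp only: insert_subset empty_subsetI simp_thms\<close>)
    have int: "\<And>r. r \<in> {p, q} \<Longrightarrow> integrable M (centered r)"
      using centered_mean_zero(1) p q by blast
    have prod: "(\<lambda>\<omega>. \<Prod>r\<in>{p, q}. centered r \<omega>) = (\<lambda>\<omega>. centered p \<omega> * centered q \<omega>)"
      using False by simp
    have "integrable M (\<lambda>\<omega>. \<Prod>r\<in>{p, q}. centered r \<omega>)"
      by (rule indep_vars_integrable[OF _ indep int]) simp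
    moreover have "(\<integral>\<omega>. (\<Prod>r\<in>{p, q}. centered r \<omega>) \<partial>M) = (\<Prod>r\<in>{p, q}. expectation (centered r))"
      by (rule indep_vars_lebesgue_integral[OF _ indep int]) simp
    moreover have "(\<Prod>r\<in>{p, q}. expectation (centered r)) = 0"
      using centered_mean_zero(2)[OF p] by simp
    ultimately show ?thesis
      using False by (simp only: prod) simp
  qed
  then show "integrable M (\<lambda>\<omega>. centered p \<omega> * centered q \<omega>)"
    and "(\<integral>\<omega>. centered p \<omega> * centered q \<omega> \<partial>M) = (if p = q then variance Y else 0)"
    by blast+
qed

lemma integral_square_centered_sum:
  assumes "finite J" "J \<subseteq> {1..} \<times> UNIV"
  shows "integrable M (\<lambda>\<omega>. (\<Sum>p\<in>J. c p * centered p \<omega>)\<^sup>2)"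
    and "(\<integral>\<omega>. (\<Sum>p\<in>J. c p * centered p \<omega>)\<^sup>2 \<partial>M) = variance Y * (\<Sum>p\<in>J. (c p)\<^sup>2)"
proof -
  have "integrable M (\<lambda>\<omega>. centered p \<omega> * centered q \<omega>)"
    and "(\<integral>\<omega>. centered p \<omega> * centered q \<omega> \<partial>M) = (if p = q then variance Y else 0)"
    if "p \<in> J" "q \<in> J" for p q
  proof -
    from that assms(2) have "p \<in> {1..} \<times> UNIV" "q \<in> {1..} \<times> UNIV"
      by auto
    then show "integrable M (\<lambda>\<omega>. centered p \<omega> * centered q \<omega>)"
      and "(\<integral>\<omega>. centered p \<omega> * centered q \<omega> \<partial>M) = (if p = q then variance Y else 0)"
      by (simp_all add: centered_orthogonal)
  qed
  note orthogonal = this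
  show "integrable M (\<lambda>\<omega>. (\<Sum>p\<in>J. c p * centered p \<omega>)\<^sup>2)"
    by (rule integral_square_sum_orthogonal(1)[OF assms(1) orthogonal])
  show "(\<integral>\<omega>. (\<Sum>p\<in>J. c p * centered p \<omega>)\<^sup>2 \<partial>M) = variance Y * (\<Sum>p\<in>J. (c p)\<^sup>2)"
    by (rule integral_square_sum_orthogonal(2)[OF assms(1) orthogonal])
qed

lemma theta_hat_deviation_component:
  assumes A: "stochastic_matrix A" and "t \<ge> 1"
  shows "(theta_hat A X t \<omega> - expectation Y *\<^sub>R (\<chi> i. 1)) $ i
      = (\<Sum>p\<in>{1..t} \<times> UNIV. mat_pow A (t - fst p) $ i $ snd p / t * centered p \<omega>)"
proof -
  define g where "g p = mat_pow A (t - fst p) $ i $ snd p / t * centered p \<omega>" for p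
  obtain n where t: "t = n + 1"
    using \<open>t \<ge> 1\<close> by (metis le_add_diff_inverse2)
  have "(theta_hat A X t \<omega> - expectation Y *\<^sub>R (\<chi> i. 1)) $ i
      = (\<Sum>k=1..t. \<Sum>l\<in>UNIV. mat_pow A (t - k) $ i $ l * (X k l \<omega> - expectation Y)) / t"
    using arg_cong[OF est_aux_deviation[OF A, of X n \<omega> "expectation Y"], of "\<lambda>v. v $ i"]
    by (simp add: theta_hat_def t matrix_vector_mult_def)
  also have "\<dots> = (\<Sum>k=1..t. \<Sum>l\<in>UNIV. g (k, l))"
    by (simp add: g_def sum_divide_distrib)
  also have "\<dots> = (\<Sum>p\<in>{1..t} \<times> UNIV. g p)"
    by (simp add: sum.cartesian_product')
  finally show ?thesis
    by (simp add: g_def)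
qed

lemma mean_square_error_theta_hat:
  assumes A: "stochastic_matrix A" and "t \<ge> 1"
  shows "(\<integral>\<omega>. (norm (theta_hat A X t \<omega> - expectation Y *\<^sub>R (\<chi> i. 1)))\<^sup>2 \<partial>M)
      = variance Y / (real t)\<^sup>2 * (\<Sum>k=1..t. frobenius_norm_sq (mat_pow A (t - k)))"
proof -
  define J where "J = {1..t} \<times> (UNIV :: 'n set)"
  define c where "c i p = mat_pow A (t - fst p) $ i $ snd p / t" for i p
  have J: "finite J" "J \<subseteq> {1..} \<times> UNIV"
    by (auto simp: J_def)
  have "(\<integral>\<omega>. (norm (theta_hat A X t \<omega> - expectation Y *\<^sub>R (\<chi> i. 1)))\<^sup>2 \<partial>M)
      = (\<integral>\<omega>. (\<Sum>i\<in>UNIV. (\<Sum>p\<in>J. c i p * centered p \<omega>)\<^sup>2) \<partial>M)"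
    using theta_hat_deviation_component[OF assms]
    by (simp add: power2_norm_vec J_def c_def)
  also have "\<dots> = variance Y * (\<Sum>i\<in>UNIV. \<Sum>p\<in>J. (c i p)\<^sup>2)"
    using integral_square_centered_sum[OF J] by (simp add: integral_sum sum_distrib_left)
  also have "(\<Sum>i\<in>UNIV. \<Sum>p\<in>J. (c i p)\<^sup>2)
      = (\<Sum>i\<in>UNIV. \<Sum>k=1..t. \<Sum>j\<in>UNIV. (mat_pow A (t - k) $ i $ j)\<^sup>2 / (real t)\<^sup>2)"
    by (simp add: J_def c_def sum.cartesian_product' power_divide)
  also have "\<dots> = (\<Sum>k=1..t. \<Sum>i\<in>UNIV. \<Sum>j\<in>UNIV. (mat_pow A (t - k) $ i $ j)\<^sup>2 / (real t)\<^sup>2)"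
    by (rule sum.swap)
  also have "\<dots> = (\<Sum>k=1..t. frobenius_norm_sq (mat_pow A (t - k))) / (real t)\<^sup>2"
    by (simp add: frobenius_norm_sq_def sum_divide_distrib)
  finally show ?thesis
    by simp
qed

lemma mean_square_error_sample_mean:
  assumes "t \<ge> 1"
  shows "(\<integral>\<omega>. (norm ((sample_mean X t \<omega> - expectation Y) *\<^sub>R (\<chi> i. 1 :: real^'n)))\<^sup>2 \<partial>M)
      = variance Y / t"
proof -
  define N where "N = real CARD('n)"
  define J where "J = {1..t} \<times> (UNIV :: 'n set)"
  have J: "finite J" "J \<subseteq> {1..} \<times> UNIV"
    by (auto simp: J_def)
  have "N > 0" "real t > 0"
    using \<open>t \<ge> 1\<close> by (simp_all add: N_def)
  have deviation: "sample_mean X t \<omega> - expectation Y = (\<Sum>p\<in>J. 1 / (N * t) * centered p \<omega>)" for \<omega>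
  proof -
    have "(\<Sum>p\<in>J. centered p \<omega>) = (\<Sum>k=1..t. \<Sum>l\<in>UNIV. X k l \<omega> - expectation Y)"
      by (simp add: J_def sum.cartesian_product')
    also have "\<dots> = (\<Sum>k=1..t. \<Sum>l\<in>UNIV. X k l \<omega>) - N * t * expectation Y"
      by (simp add: sum_subtractf N_def)
    also have "(\<Sum>k=1..t. \<Sum>l\<in>UNIV. X k l \<omega>) = (\<Sum>l\<in>UNIV. \<Sum>k=1..t. X k l \<omega>)"
      by (rule sum.swap)
    finally have sum_centered:
      "(\<Sum>p\<in>J. centered p \<omega>) = (\<Sum>l\<in>UNIV. \<Sum>k=1..t. X k l \<omega>) - N * t * expectation Y" .
    have "(\<Sum>p\<in>J. 1 / (N * t) * centered p \<omega>) = 1 / (N * t) * (\<Sum>p\<in>J. centered p \<omega>)"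
      by (simp add: sum_distrib_left)
    also have "\<dots> = sample_mean X t \<omega> - expectation Y"
      using \<open>N > 0\<close> \<open>real t > 0\<close>
      by (simp add: sum_centered sample_mean_def N_def field_simps)
    finally show ?thesis
      by simp
  qed
  have "(\<integral>\<omega>. (norm ((sample_mean X t \<omega> - expectation Y) *\<^sub>R (\<chi> i. 1 :: real^'n)))\<^sup>2 \<partial>M)
      = (\<integral>\<omega>. N * (\<Sum>p\<in>J. 1 / (N * t) * centered p \<omega>)\<^sup>2 \<partial>M)"
    by (simp add: deviation power2_norm_vec N_def power_mult_distrib)
  also have "\<dots> = N * (\<integral>\<omega>. (\<Sum>p\<in>J. 1 / (N * t) * centered p \<omega>)\<^sup>2 \<partial>M)"
    by (rule integral_mult_right_zero)
  also have "\<dots> = N * (variance Y * (\<Sum>p\<in>J. (1 / (N * t))\<^sup>2))"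
    by (subst integral_square_centered_sum(2)[OF J]) (rule refl)
  also have "\<dots> = N * (variance Y * (card J * (1 / (N * t))\<^sup>2))"
    by simp
  also have "\<dots> = variance Y / t"
    using \<open>N > 0\<close> \<open>real t > 0\<close>
    by (simp add: J_def N_def card_cartesian_product power2_eq_square)
  finally show ?thesis .
qed

lemma perf_ratio_eq:
  assumes A: "stochastic_matrix A" and "t \<ge> 1" and "variance Y > 0"
  shows "perf_ratio M (expectation Y) A X t = t / (\<Sum>k=1..t. frobenius_norm_sq (mat_pow A (t - k)))"
proof -
  define F where "F = (\<Sum>k=1..t. frobenius_norm_sq (mat_pow A (t - k)))"
  define \<sigma> where "\<sigma> = variance Y"
  have "real t \<le> F"
    unfolding F_def by (rule sum_frobenius_norm_sq_mat_pow_bounds(1)[OF A])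
  then show ?thesis
    using \<open>t \<ge> 1\<close> \<open>variance Y > 0\<close>
    unfolding perf_ratio_def mean_square_error_theta_hat[OF A \<open>t \<ge> 1\<close>]
      mean_square_error_sample_mean[OF \<open>t \<ge> 1\<close>] F_def[symmetric] \<sigma>_def[symmetric]
    by (simp add: field_simps power2_eq_square)
qed

end

theorem proposition1:
  fixes M :: "'a measure" and Y :: "'a \<Rightarrow> real"
    and X :: "nat \<Rightarrow> 'n::finite \<Rightarrow> 'a \<Rightarrow> real"
    and A :: "real^'n^'n" and t :: nat
  assumes "prob_space M"
    and "Y \<in> borel_measurable M"
    and "integrable M (\<lambda>\<omega>. (Y \<omega>)\<^sup>2)"
    and "(\<integral>\<omega>. (Y \<omega> - (\<integral>\<omega>'. Y \<omega>' \<partial>M))\<^sup>2 \<partial>M) > 0"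
    and "CARD('n) \<ge> 2"
    and "prob_space.indep_vars M (\<lambda>_. borel) (\<lambda>(k, i). X k i) ({1..} \<times> UNIV)"
    and "\<And>k i. k \<ge> 1 \<Longrightarrow> distr M borel (X k i) = distr M borel Y"
    and "stochastic_matrix A"
    and "t \<ge> 1"
  shows "1 / real CARD('n) \<le> perf_ratio M (\<integral>\<omega>. Y \<omega> \<partial>M) A X t
         \<and> perf_ratio M (\<integral>\<omega>. Y \<omega> \<partial>M) A X t \<le> 1
         \<and> (\<not> irreducible_matrix A \<longrightarrow>
              perf_ratio M (\<integral>\<omega>. Y \<omega> \<partial>M) A X t \<le> 1 - 1 / (real CARD('n) + 1))"
proof -
  interpret iid_array M Y X
    using assms(1-3,6,7) by (simp add: iid_array_def iid_array_axioms_def)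
  define N where "N = real CARD('n)"
  define F where "F = (\<Sum>k=1..t. frobenius_norm_sq (mat_pow A (t - k)))"
  have ratio: "perf_ratio M (\<integral>\<omega>. Y \<omega> \<partial>M) A X t = t / F"
    using perf_ratio_eq[OF assms(8,9)] assms(4) by (simp add: F_def)
  have "real t > 0" "N > 0"
    using assms(9) by (simp_all add: N_def)
  moreover have "real t \<le> F" "F \<le> N * t"
    using sum_frobenius_norm_sq_mat_pow_bounds[OF assms(8), of t] by (simp_all add: F_def N_def)
  moreover have "real t * (1 + 1 / N) \<le> F" if "\<not> irreducible_matrix A"
    using sum_frobenius_norm_sq_mat_pow_reducible[OF assms(8) that, of t] by (simp add: F_def N_def)
  ultimately show ?thesis
    unfolding ratio N_def[symmetric] by (simp add: field_simps)
qed

end
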